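(* Let $n = 2k+1$ be an odd integer and $m = k(2k+1)$. If an edge-coloring of a complete graph contains no rainbow $n$-cycle and no rainbow $m$-cycle, then it contains no rainbow $M$-cycle for every integer $M \ge 4k^3 - 2k^2 - 8k + 8 = n^3/2 - 2n^2 - 3n/2 + 11$.
   Context: A coloring is an arbitrary (not necessarily proper) assignment of colors, from an arbitrary set, to the edges of an undirected complete graph; the graph may be finite or infinite. A rainbow $n$-cycle is a cycle through $n$ distinct vertices whose $n$ edges all receive pairwise distinct colors. *)

theory Defs
  imports Main
begin

text \<open>An edge-coloring of the complete graph on vertex type 'a is any function
  c assigning a color to each edge; the edge between distinct vertices u, v is the
  unordered pair {u, v}, so c {u, v} is its color (values on other sets are irrelevant).\<close>

definition rainbow_cycle :: "('a set \<Rightarrow> 'b) \<Rightarrow> nat \<Rightarrow> bool" where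
  "rainbow_cycle c n \<longleftrightarrow> 3 \<le> n \<and>
     (\<exists>vs :: 'a list. length vs = n \<and> distinct vs \<and>
        inj_on (\<lambda>i. c {vs ! i, vs ! ((i + 1) mod n)}) {..<n})"

end

theory Submission
  imports Defs "HOL-Number_Theory.Cong"
begin

text \<open>The chord between the first vertex and the \<open>a\<close>-th vertex of an \<open>(a + b - 2)\<close>-cycle
  splits it into an \<open>a\<close>-cycle and a \<open>b\<close>-cycle. In a rainbow cycle the chord's color occurs on at
  most one of the two arcs, so one of the two smaller cycles is rainbow. Hence the lengths
  \<open>\<ge> 3\<close> without rainbow cycles are closed under \<open>(a, b) \<mapsto> a + b - 2\<close>: \<open>M\<close> is excluded
  as soon as \<open>M - 2\<close> is a nonnegative combination of \<open>n - 2 = 2k - 1\<close> and \<open>m - 2\<close>. These are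
  coprime because \<open>m - 1 = (n - 2)(k + 1)\<close>, and by Sylvester's bound every integer
  \<open>\<ge> (n - 3)(m - 3)\<close> is such a combination.\<close>

definition cycle_color :: "('a set \<Rightarrow> 'b) \<Rightarrow> 'a list \<Rightarrow> nat \<Rightarrow> 'b" where
  "cycle_color c vs i = c {vs ! i, vs ! ((i + 1) mod length vs)}"

lemma rainbow_cycle_iff:
  "rainbow_cycle c n \<longleftrightarrow> 3 \<le> n \<and>
     (\<exists>vs. length vs = n \<and> distinct vs \<and> inj_on (cycle_color c vs) {..<n})"
  unfolding rainbow_cycle_def cycle_color_def by auto

text \<open>The arc \<open>vs ! s, \<dots>, vs ! (s + a - 1)\<close>, whose last index may wrap around to \<open>0\<close>,
  closed by a chord.\<close>

lemma rainbow_cycle_arc: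
  assumes vs: "distinct vs" "length vs = L" and inj: "inj_on (cycle_color c vs) {..<L}"
    and a: "3 \<le> a" "a \<le> L" "s + a \<le> L + 1"
    and chord: "c {vs ! ((s + a - 1) mod L), vs ! s} \<notin> cycle_color c vs ` {s..<s + a - 1}"
  shows "rainbow_cycle c a"
proof -
  define ws where "ws = take a (rotate s vs)"
  have ws_len: "length ws = a" using a vs by (simp add: ws_def)
  have ws_nth: "ws ! i = vs ! ((s + i) mod L)" if "i < a" for i
    using that a vs by (simp add: ws_def nth_rotate)
  have path: "cycle_color c ws i = cycle_color c vs (s + i)" if "i < a - 1" for i
    using that a by (simp add: cycle_color_def ws_len ws_nth vs(2))
  have closing: "cycle_color c ws (a - 1) = c {vs ! ((s + a - 1) mod L), vs ! s}"
    using a by (simp add: cycle_color_def ws_len ws_nth)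
  have path_image: "cycle_color c ws ` {..<a - 1} = cycle_color c vs ` {s..<s + a - 1}"
  proof -
    have "(+) s ` {..<a - 1} = {s..<s + a - 1}"
      using a by (simp add: lessThan_atLeast0 add.commute)
    then show ?thesis using path by (metis (no_types, lifting) image_cong image_image lessThan_iff)
  qed
  have "inj_on (cycle_color c vs \<circ> (+) s) {..<a - 1}"
    using a by (intro comp_inj_on inj_on_subset[OF inj]) auto
  then have "inj_on (cycle_color c ws) {..<a - 1}"
    by (rule inj_on_cong[THEN iffD1, rotated]) (simp add: path)
  moreover have "{..<a} = insert (a - 1) {..<a - 1}" using a by auto
  ultimately have "inj_on (cycle_color c ws) {..<a}"
    using chord closing path_image by simp
  moreover have "distinct ws" using vs by (simp add: ws_def)
  ultimately show ?thesis using a ws_len by (auto simp: rainbow_cycle_iff)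
qed

lemma rainbow_cycle_chord:
  assumes "rainbow_cycle c (a + b - 2)" and a: "3 \<le> a" and b: "3 \<le> b"
  shows "rainbow_cycle c a \<or> rainbow_cycle c b"
proof -
  define L where "L = a + b - 2"
  obtain vs where vs: "distinct vs" "length vs = L" and inj: "inj_on (cycle_color c vs) {..<L}"
    using assms(1) by (auto simp: rainbow_cycle_iff L_def)
  define \<chi> where "\<chi> = c {vs ! (a - 1), vs ! 0}"
  have "cycle_color c vs ` {0..<a - 1} \<inter> cycle_color c vs ` {a - 1..<L} = {}"
    using b by (subst inj_on_image_Int[OF inj, symmetric]) (auto simp: L_def)
  then consider "\<chi> \<notin> cycle_color c vs ` {0..<a - 1}" | "\<chi> \<notin> cycle_color c vs ` {a - 1..<L}"
    by blast
  then show ?thesis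
  proof cases
    case 1
    then have "rainbow_cycle c a"
      using a b by (intro rainbow_cycle_arc[OF vs inj, of a 0]) (auto simp: L_def \<chi>_def)
    then show ?thesis ..
  next
    case 2
    have "a - 1 + b - 1 = L" using a b by (simp add: L_def)
    then have "rainbow_cycle c b"
      using 2 a b by (intro rainbow_cycle_arc[OF vs inj, of b "a - 1"])
        (auto simp: \<chi>_def insert_commute)
    then show ?thesis ..
  qed
qed

lemma no_rainbow_cycle_add:
  assumes "\<not> rainbow_cycle c a" "\<not> rainbow_cycle c b" "3 \<le> a" "3 \<le> b"
  shows "\<not> rainbow_cycle c (a + b - 2)"
  using rainbow_cycle_chord assms by blast

lemma no_rainbow_cycle_iterate:
  assumes a: "\<not> rainbow_cycle c a" "3 \<le> a" and b: "\<not> rainbow_cycle c b" "3 \<le> b"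
  shows "\<not> rainbow_cycle c (a + j * (b - 2))"
proof (induction j)
  case 0
  then show ?case using a by simp
next
  case (Suc j)
  have "\<not> rainbow_cycle c (a + j * (b - 2) + b - 2)"
    using no_rainbow_cycle_add[OF Suc b(1) _ b(2)] a(2) by simp
  moreover have "a + j * (b - 2) + b - 2 = a + Suc j * (b - 2)" using b(2) by simp
  ultimately show ?case by simp
qed

lemma no_rainbow_cycle_combination:
  assumes n: "\<not> rainbow_cycle c n" "3 \<le> n" and m: "\<not> rainbow_cycle c m" "3 \<le> m"
    and "0 < x + y"
  shows "\<not> rainbow_cycle c (x * (n - 2) + y * (m - 2) + 2)"
proof (cases x)
  case 0
  then obtain y' where y: "y = Suc y'" using \<open>0 < x + y\<close> by (cases y) auto
  then have "x * (n - 2) + y * (m - 2) + 2 = m + y' * (m - 2)" using 0 m(2) by simp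
  then show ?thesis using no_rainbow_cycle_iterate[OF m m, of y'] by metis
next
  case (Suc x')
  have "\<not> rainbow_cycle c (n + x' * (n - 2) + y * (m - 2))"
    using no_rainbow_cycle_iterate[OF no_rainbow_cycle_iterate[OF n n] _ m] n(2) by simp
  moreover have "x * (n - 2) + y * (m - 2) + 2 = n + x' * (n - 2) + y * (m - 2)"
    using Suc n(2) by simp
  ultimately show ?thesis by metis
qed

lemma nonneg_combination_if_ge_Frobenius_bound:
  fixes p q N :: int
  assumes "0 < p" "0 \<le> q" "coprime p q" "(p - 1) * (q - 1) \<le> N"
  shows "\<exists>x y :: nat. N = int x * p + int y * q"
proof -
  obtain v where v: "[q * v = 1] (mod p)"
    using cong_solve_coprime_int \<open>coprime p q\<close> coprime_commute by blast
  define y where "y = (N * v) mod p"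
  have y: "0 \<le> y" "y \<le> p - 1" using \<open>0 < p\<close> by (auto simp: y_def)
  have "[y = N * v] (mod p)" by (simp add: y_def cong_def)
  then have "[y * q = N * (q * v)] (mod p)" using cong_scalar_right[of y "N * v" p q] by (simp add: ac_simps)
  also have "[N * (q * v) = N * 1] (mod p)" using v by (rule cong_scalar_left)
  finally obtain x where x: "N - y * q = p * x"
    by (metis cong_iff_dvd_diff cong_sym dvd_def mult_1_right)
  have "y * q \<le> (p - 1) * q" using y \<open>0 \<le> q\<close> by (simp add: mult_right_mono)
  then have "p * (x + 1) > 0" using x assms(4) by (simp add: algebra_simps)
  then have "x \<ge> 0" using \<open>0 < p\<close> zero_less_mult_pos by fastforce
  then have "N = int (nat x) * p + int (nat y) * q" using x y by (simp add: algebra_simps)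
  then show ?thesis by blast
qed

lemma coprime_cycle_lengths:
  "coprime (int (2 * k + 1) - 2) (int (k * (2 * k + 1)) - 2)"
proof (rule coprimeI)
  fix d assume "d dvd int (2 * k + 1) - 2" "d dvd int (k * (2 * k + 1)) - 2"
  then have "d dvd (int (2 * k + 1) - 2) * (int k + 1) - (int (k * (2 * k + 1)) - 2)"
    by (simp add: dvd_diff)
  also have "(int (2 * k + 1) - 2) * (int k + 1) - (int (k * (2 * k + 1)) - 2) = 1"
    by (simp add: algebra_simps)
  finally show "is_unit d" .
qed

theorem lemma10:
  fixes c :: "'a set \<Rightarrow> 'b" and k M :: nat
  assumes "k \<ge> 1"
    and "\<not> rainbow_cycle c (2 * k + 1)"
    and "\<not> rainbow_cycle c (k * (2 * k + 1))"
    and "int M \<ge> 4 * int k ^ 3 - 2 * int k ^ 2 - 8 * int k + 8"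
  shows "\<not> rainbow_cycle c M"
proof
  assume "rainbow_cycle c M"
  then have "3 \<le> M" by (simp add: rainbow_cycle_def)
  define n m where "n = 2 * k + 1" and "m = k * (2 * k + 1)"
  have "3 \<le> n" using \<open>k \<ge> 1\<close> by (simp add: n_def)
  moreover have "n \<le> m" using \<open>k \<ge> 1\<close> mult_le_mono1[of 1 k n] by (simp add: n_def m_def)
  ultimately have "3 \<le> m" by simp
  have "coprime (int n - 2) (int m - 2)"
    unfolding n_def m_def by (rule coprime_cycle_lengths)
  moreover have "(int n - 2 - 1) * (int m - 2 - 1) \<le> int M - 2"
    using assms(4) by (simp add: n_def m_def algebra_simps power3_eq_cube power2_eq_square)
  ultimately obtain x y :: nat where "int M - 2 = int x * (int n - 2) + int y * (int m - 2)"
    using nonneg_combination_if_ge_Frobenius_bound \<open>3 \<le> n\<close> \<open>3 \<le> m\<close> by fastforce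
  then have "int M = int (x * (n - 2) + y * (m - 2) + 2)"
    using \<open>3 \<le> n\<close> \<open>3 \<le> m\<close> by (simp add: of_nat_diff)
  then have M: "M = x * (n - 2) + y * (m - 2) + 2" by (simp only: of_nat_eq_iff)
  then have "0 < x + y" using \<open>3 \<le> M\<close> by (cases "x + y") auto
  moreover have "\<not> rainbow_cycle c n" "\<not> rainbow_cycle c m"
    using assms(2,3) by (simp_all add: n_def m_def)
  ultimately show False
    using no_rainbow_cycle_combination \<open>3 \<le> n\<close> \<open>3 \<le> m\<close> \<open>rainbow_cycle c M\<close> M by metis
qed

end
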